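(* Let $G=(V,E)$ be an acyclic finite directed graph, $\Gamma\subset V$ a subset containing all sinks and sources of $G$ with $V\setminus\Gamma\neq\emptyset$, and $z\in\mathrm{Sym}_d^\Gamma$. For $x\in\mathrm{Sym}_d^V(z)$, both $\phi_d(x)\to\infty$ and $\chi_d(x)\to\infty$ as $\|x\|\to\infty$, where $\|\cdot\|$ is any norm on $\mathrm{Sym}_d^V$.
   Context: Edges are ordered pairs $(v,w)$ with $v\neq w$, written $v\to w$; a sink has no outgoing edges, a source no incoming edges; acyclic means no directed cycles. $\mathrm{Sym}_d$ is the space of $d\times d$ real symmetric matrices, $\mathrm{Sym}_d^V$ arrays $x=(x_v)_{v\in V}$, and $\mathrm{Sym}_d^V(z)=\{x\in\mathrm{Sym}_d^V:x_v=z_v\ \forall v\in\Gamma\}$. $\phi_d(x)=\sum_{v\to w}\operatorname{tr}[e^{x_v}e^{-x_w}]$ and $\chi_d(x)=\sum_{v\to w}\operatorname{tr}[e^{x_v-x_w}]$ (matrix exponentials). *)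

theory Defs
  imports "HOL-Analysis.Analysis"
begin

text \<open>d x d real matrices are rendered as real^'d^'d (d = CARD('d)).\<close>

definition sym_mat :: "real^'d^'d \<Rightarrow> bool" where
  "sym_mat A \<longleftrightarrow> transpose A = A"

primrec matpow :: "real^'d^'d \<Rightarrow> nat \<Rightarrow> real^'d^'d" where
  "matpow A 0 = mat 1"
| "matpow A (Suc n) = A ** matpow A n"

definition mexp :: "real^'d^'d \<Rightarrow> real^'d^'d" where
  "mexp A = (\<Sum>n. (1 / fact n) *\<^sub>R matpow A n)"

text \<open>Graph G = (V,E) with vertex type 'v (finite), V = UNIV, edge relation E.\<close>
definition is_sink :: "('v \<times> 'v) set \<Rightarrow> 'v \<Rightarrow> bool" where
  "is_sink E v \<longleftrightarrow> (\<forall>w. (v, w) \<notin> E)"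

definition is_source :: "('v \<times> 'v) set \<Rightarrow> 'v \<Rightarrow> bool" where
  "is_source E v \<longleftrightarrow> (\<forall>w. (w, v) \<notin> E)"

definition SymV :: "(real^'d^'d^'v) set" where
  "SymV = {x. \<forall>v. sym_mat (x $ v)}"

definition SymV_bd :: "'v set \<Rightarrow> ('v \<Rightarrow> real^'d^'d) \<Rightarrow> (real^'d^'d^'v) set" where
  "SymV_bd \<Gamma> z = {x \<in> SymV. \<forall>v\<in>\<Gamma>. x $ v = z v}"

definition phi :: "('v \<times> 'v) set \<Rightarrow> real^'d^'d^'v \<Rightarrow> real" where
  "phi E x = (\<Sum>(v, w)\<in>E. trace (mexp (x $ v) ** mexp (- (x $ w))))"

definition chi :: "('v \<times> 'v) set \<Rightarrow> real^'d^'d^'v \<Rightarrow> real" where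
  "chi E x = (\<Sum>(v, w)\<in>E. trace (mexp (x $ v - x $ w)))"

definition is_norm_on :: "'a::real_vector set \<Rightarrow> ('a \<Rightarrow> real) \<Rightarrow> bool" where
  "is_norm_on S N \<longleftrightarrow>
     (\<forall>x\<in>S. 0 \<le> N x) \<and> (\<forall>x\<in>S. N x = 0 \<longleftrightarrow> x = 0) \<and>
     (\<forall>x\<in>S. \<forall>y\<in>S. N (x + y) \<le> N x + N y) \<and>
     (\<forall>c. \<forall>x\<in>S. N (c *\<^sub>R x) = \<bar>c\<bar> * N x)"

end

theory Submission
  imports Defs
begin

text \<open>
  The key estimate is u.(D u) <= |u|^2 tr e^D for symmetric D. For a unit vector u,
  q(D) = u.(e^D u) satisfies q(D)^2 <= q(2D) by Cauchy-Schwarz and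
  q(D/N) >= 1 + u.(D u)/N - |D|^2/N^2 by the exponential series, so Bernoulli's inequality
  with N = 2^k gives u.(D u) <= q(D) <= tr e^D.

  On a sublevel set of phi every edge term tr(e^{x_v} e^{-x_w}) is bounded, and
  tr e^A <= tr(e^A e^{-B}) tr e^B because e^{A/2} = (e^{A/2} e^{-B/2}) e^{B/2} and the
  Frobenius norm is submultiplicative. So tr e^{x_v} is bounded by following edges forward to
  a sink, and tr e^{-x_v} by following them backward to a source; both lie in Gamma, where x is
  fixed. On a sublevel set of chi the key estimate for x_v - x_w gives
  u.(x_v u) <= u.(x_w u) + M |u|^2 along every edge, and the same propagation bounds the
  quadratic forms directly. Either way the quadratic forms, hence the entries, of all x_v are
  bounded, and every norm on Sym_d^V is dominated by the Euclidean one.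
\<close>

section \<open>Frobenius norm of matrices\<close>

lemma norm_vec_power2: "(norm (x::'a::real_inner^'n))\<^sup>2 = (\<Sum>i\<in>UNIV. (norm (x$i))\<^sup>2)"
  unfolding power2_norm_eq_inner by (simp add: inner_vec_def)

lemma norm_matrix_power2: "(norm (A::real^'n^'m))\<^sup>2 = (\<Sum>i\<in>UNIV. \<Sum>j\<in>UNIV. (A$i$j)\<^sup>2)"
  by (simp add: norm_vec_power2)

lemma norm_transpose: "norm (transpose (A::real^'n^'m)) = norm A"
proof -
  have "(norm (transpose A))\<^sup>2 = (norm A)\<^sup>2"
    unfolding norm_matrix_power2 transpose_def by (simp add: sum.swap[of _ "UNIV::'n set"])
  then show ?thesis by simp
qed

lemma inner_power2_le: "(inner x y)\<^sup>2 \<le> (norm x)\<^sup>2 * (norm y)\<^sup>2"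
  using Cauchy_Schwarz_ineq[of x y] by (simp add: power2_norm_eq_inner)

lemma norm_matrix_mult_le: "norm ((A::real^'n^'m) ** (B::real^'p^'n)) \<le> norm A * norm B"
proof -
  have "(norm (A ** B))\<^sup>2 = (\<Sum>i\<in>UNIV. \<Sum>j\<in>UNIV. (inner (A$i) (transpose B$j))\<^sup>2)"
    unfolding norm_matrix_power2
    by (simp add: matrix_matrix_mult_def inner_vec_def transpose_def)
  also have "\<dots> \<le> (\<Sum>i\<in>UNIV. \<Sum>j\<in>UNIV. (norm (A$i))\<^sup>2 * (norm (transpose B$j))\<^sup>2)"
    by (intro sum_mono inner_power2_le)
  also have "\<dots> = (norm A * norm B)\<^sup>2"
    by (simp add: sum_product[symmetric] norm_vec_power2[symmetric] norm_transpose
        power_mult_distrib)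
  finally show ?thesis
    by (rule power2_le_imp_le) simp
qed

lemma norm_matrix_vector_mult_le: "norm ((A::real^'n^'m) *v x) \<le> norm A * norm x"
proof -
  have "(norm (A *v x))\<^sup>2 = (\<Sum>i\<in>UNIV. (inner (A$i) x)\<^sup>2)"
    by (simp add: norm_vec_power2 matrix_vector_mul_component)
  also have "\<dots> \<le> (\<Sum>i\<in>UNIV. (norm (A$i))\<^sup>2 * (norm x)\<^sup>2)"
    by (intro sum_mono inner_power2_le)
  also have "\<dots> = (norm A * norm x)\<^sup>2"
    by (simp add: sum_distrib_right[symmetric] norm_vec_power2[symmetric] power_mult_distrib)
  finally show ?thesis
    by (rule power2_le_imp_le) simp
qed

lemma abs_inner_matrix_vector_le: "\<bar>inner u ((A::real^'n^'n) *v u)\<bar> \<le> (norm u)\<^sup>2 * norm A"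
proof -
  have "\<bar>inner u (A *v u)\<bar> \<le> norm u * (norm A * norm u)"
    by (intro order_trans[OF Cauchy_Schwarz_ineq2] mult_left_mono norm_matrix_vector_mult_le) simp
  then show ?thesis by (simp add: power2_eq_square mult_ac)
qed

lemma norm_vec_le_card_mult:
  fixes x :: "'a::real_normed_vector^'n"
  assumes "\<And>i. norm (x $ i) \<le> B"
  shows "norm x \<le> real CARD('n) * B"
proof -
  have "norm x \<le> (\<Sum>i\<in>UNIV. norm (x $ i))"
    by (simp add: norm_vec_def L2_set_le_sum)
  also have "\<dots> \<le> CARD('n) * B"
    using sum_bounded_above[of UNIV "\<lambda>i. norm (x $ i)" B] assms by simp
  finally show ?thesis .
qed

lemma trace_transpose_mult_self: "trace (transpose X ** (X::real^'d^'d)) = (norm X)\<^sup>2"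
proof -
  have "trace (transpose X ** X) = (\<Sum>i\<in>UNIV. \<Sum>k\<in>UNIV. (X$k$i)\<^sup>2)"
    by (simp add: trace_def matrix_matrix_mult_def transpose_def power2_eq_square)
  also have "\<dots> = (norm X)\<^sup>2"
    unfolding norm_matrix_power2 by (rule sum.swap)
  finally show ?thesis .
qed

lemma inner_axis_matrix_vector: "inner (axis i 1) (X *v axis j 1) = X $ i $ j"
  by (simp add: matrix_vector_mult_basis inner_axis' column_def)

lemma bounded_bilinear_matrix_mult:
  "bounded_bilinear ((**) :: real^'n^'m \<Rightarrow> real^'p^'n \<Rightarrow> real^'p^'m)"
proof
  fix a a' :: "real^'n^'m" and b b' :: "real^'p^'n" and r :: real
  show "(a + a') ** b = a ** b + a' ** b"
    by (simp add: matrix_matrix_mult_def vec_eq_iff sum.distrib distrib_right)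
  show "a ** (b + b') = a ** b + a ** b'"
    by (simp add: matrix_add_ldistrib)
  show "r *\<^sub>R a ** b = r *\<^sub>R (a ** b)"
    by (simp add: scalar_matrix_assoc)
  show "a ** r *\<^sub>R b = r *\<^sub>R (a ** b)"
    by (simp add: matrix_scalar_ac scalar_matrix_assoc)
  show "\<exists>K. \<forall>a b. norm ((a::real^'n^'m) ** (b::real^'p^'n)) \<le> norm a * norm b * K"
    by (rule exI[of _ 1]) (simp add: norm_matrix_mult_le)
qed

lemma bounded_linear_transpose: "bounded_linear (transpose :: real^'n^'m \<Rightarrow> real^'m^'n)"
  by (simp add: linear_conv_bounded_linear[symmetric] linearI transpose_def vec_eq_iff)

lemma bounded_linear_quadratic_form: "bounded_linear (\<lambda>M::real^'n^'n. inner u (M *v u))"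
  by (simp add: linear_conv_bounded_linear[symmetric] linearI matrix_vector_mult_add_rdistrib
      inner_add_right scaleR_matrix_vector_assoc[symmetric])

section \<open>The matrix exponential\<close>

lemma Cauchy_product_defect_tendsto_zero:
  fixes a b :: "nat \<Rightarrow> real"
  assumes a: "summable (\<lambda>k. norm (a k))" and b: "summable (\<lambda>k. norm (b k))"
  shows "(\<lambda>n. (\<Sum>i<n. a i) * (\<Sum>j<n. b j) - (\<Sum>k<n. \<Sum>i\<le>k. a i * b (k - i))) \<longlonglongrightarrow> 0"
proof -
  have "(\<lambda>n. (\<Sum>i<n. a i) * (\<Sum>j<n. b j)) \<longlonglongrightarrow> suminf a * suminf b"
    using summable_norm_cancel[OF a] summable_norm_cancel[OF b]
    by (intro tendsto_mult summable_LIMSEQ)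
  moreover have "(\<lambda>n. \<Sum>k<n. \<Sum>i\<le>k. a i * b (k - i)) \<longlonglongrightarrow> suminf a * suminf b"
    using Cauchy_product_sums[OF a b] by (simp add: sums_def)
  ultimately show ?thesis
    using tendsto_diff by fastforce
qed

lemma bounded_bilinear_Cauchy_product_sums:
  fixes a :: "nat \<Rightarrow> 'a::banach" and b :: "nat \<Rightarrow> 'b::banach"
  assumes f: "bounded_bilinear f"
    and a: "summable (\<lambda>k. norm (a k))" and b: "summable (\<lambda>k. norm (b k))"
  shows "(\<lambda>k. \<Sum>i\<le>k. f (a i) (b (k - i))) sums (f (suminf a) (suminf b))"
proof -
  obtain K where K: "\<And>x y. norm (f x y) \<le> norm x * norm y * K"
    using bounded_bilinear.bounded[OF f] by blast
  define S where "S n = {..<n} \<times> {..<n} - {(i, j). i + j < n}" for n :: nat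
  define P where "P n = f (\<Sum>i<n. a i) (\<Sum>j<n. b j)" for n
  define C where "C n = (\<Sum>k<n. \<Sum>i\<le>k. f (a i) (b (k - i)))" for n
  define p where "p n = (\<Sum>i<n. norm (a i)) * (\<Sum>j<n. norm (b j))" for n
  define c where "c n = (\<Sum>k<n. \<Sum>i\<le>k. norm (a i) * norm (b (k - i)))" for n
  have triangle: "{(i, j). i + j < n} \<subseteq> {..<n} \<times> {..<n}" for n :: nat
    by auto
  have "C n = (\<Sum>(i, j)\<in>{(i, j). i + j < n}. f (a i) (b j))"
    and "c n = (\<Sum>(i, j)\<in>{(i, j). i + j < n}. norm (a i) * norm (b j))" for n
    unfolding C_def c_def by (simp_all only: sum.triangle_reindex)
  moreover have "P n = (\<Sum>(i, j)\<in>{..<n} \<times> {..<n}. f (a i) (b j))" for n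
    unfolding P_def bounded_bilinear.sum_left[OF f]
    unfolding bounded_bilinear.sum_right[OF f] by (simp add: sum.cartesian_product)
  moreover have "p n = (\<Sum>(i, j)\<in>{..<n} \<times> {..<n}. norm (a i) * norm (b j))" for n
    unfolding p_def by (simp add: sum_product sum.cartesian_product)
  \<comment> \<open>P n - C n sums over the pairs i, j < n with i + j \<ge> n; so does p n - c n for the
      norms, and p n - c n tends to 0 by the scalar Cauchy product theorem.\<close>
  ultimately have P_C: "P n - C n = (\<Sum>(i, j)\<in>S n. f (a i) (b j))"
    and p_c: "p n - c n = (\<Sum>(i, j)\<in>S n. norm (a i) * norm (b j))" for n
    unfolding S_def by (simp_all add: sum_diff[OF _ triangle])
  have bound: "norm (P n - C n) \<le> (p n - c n) * K" for n
    unfolding P_C p_c sum_distrib_right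
    by (intro order_trans[OF norm_sum] sum_mono) (auto simp: K)
  have pc: "(\<lambda>n. p n - c n) \<longlonglongrightarrow> 0"
    unfolding p_def c_def using a b by (intro Cauchy_product_defect_tendsto_zero) simp_all
  have "(\<lambda>n. P n - C n) \<longlonglongrightarrow> 0"
    using always_eventually[OF allI[OF bound]] tendsto_mult_left_zero[OF pc]
    by (rule Lim_null_comparison)
  moreover have "P \<longlonglongrightarrow> f (suminf a) (suminf b)"
    unfolding P_def
    using bounded_bilinear.tendsto[OF f summable_LIMSEQ[OF summable_norm_cancel[OF a]]
        summable_LIMSEQ[OF summable_norm_cancel[OF b]]] .
  ultimately show ?thesis
    unfolding sums_def C_def[symmetric] by (rule Lim_transform2[rotated])
qed

lemma matpow_Suc_right: "matpow A (Suc n) = matpow A n ** A"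
  by (induction n) (simp_all add: matrix_mul_assoc)

lemma matpow_add: "matpow A (m + n) = matpow A m ** matpow A n"
  by (induction m) (simp_all add: matrix_mul_assoc)

lemma matpow_scaleR: "matpow (c *\<^sub>R A) n = c ^ n *\<^sub>R matpow A n"
  by (induction n) (simp_all add: matrix_scalar_ac scalar_matrix_assoc[symmetric])

lemma transpose_matpow: "transpose (matpow A n) = matpow (transpose A) n"
  by (induction n) (simp_all add: matrix_transpose_mul flip: matpow_Suc_right)

lemma norm_matpow_Suc_le: "norm (matpow A (Suc n)) \<le> norm A ^ Suc n"
proof (induction n)
  case (Suc n)
  have "norm (matpow A (Suc (Suc n))) \<le> norm A * norm (matpow A (Suc n))"
    by (simp only: matpow.simps norm_matrix_mult_le)
  also have "\<dots> \<le> norm A * norm A ^ Suc n"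
    by (intro mult_left_mono Suc.IH) simp
  finally show ?case by simp
qed simp

lemma summable_norm_mexp_series:
  "summable (\<lambda>n. norm ((1 / fact n) *\<^sub>R matpow (A::real^'d^'d) n))"
proof -
  have exp_series: "summable (\<lambda>n. norm A ^ Suc n / fact (Suc n))"
    using summable_exp[of "norm A"] by (subst summable_Suc_iff) (simp add: field_simps)
  have "norm ((1 / fact (Suc n)) *\<^sub>R matpow A (Suc n)) \<le> norm A ^ Suc n / fact (Suc n)" for n
    using norm_matpow_Suc_le[of A n] by (simp add: divide_right_mono del: matpow.simps fact_Suc)
  then have "summable (\<lambda>n. norm ((1 / fact (Suc n)) *\<^sub>R matpow A (Suc n)))"
    by (intro summable_comparison_test'[OF exp_series]) simp
  then show ?thesis
    by (rule iffD1[OF summable_Suc_iff])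
qed

lemma mexp_sums: "(\<lambda>n. (1 / fact n) *\<^sub>R matpow A n) sums mexp A"
  unfolding mexp_def
  by (rule summable_sums[OF summable_norm_cancel[OF summable_norm_mexp_series]])

lemma bounded_linear_mexp_sums:
  "bounded_linear f \<Longrightarrow> (\<lambda>n. f ((1 / fact n) *\<^sub>R matpow A n)) sums f (mexp A)"
  by (rule bounded_linear.sums[OF _ mexp_sums])

lemma mexp_eqI: "(\<lambda>n. (1 / fact n) *\<^sub>R matpow A n) sums B \<Longrightarrow> mexp A = B"
  using mexp_sums sums_unique2 by blast

lemma transpose_mexp: "transpose (mexp A) = mexp (transpose A)"
  using bounded_linear_mexp_sums[OF bounded_linear_transpose, of A]
  by (intro mexp_eqI[symmetric]) (simp add: transpose_scalar transpose_matpow)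

lemma mexp_zero: "mexp (0::real^'d^'d) = mat 1"
proof (rule mexp_eqI)
  have "(1 / fact n) *\<^sub>R matpow (0::real^'d^'d) n = (if n = 0 then mat 1 else 0)" for n
    by (cases n) simp_all
  then show "(\<lambda>n. (1 / fact n) *\<^sub>R matpow (0::real^'d^'d) n) sums mat 1"
    using sums_single[of 0 "\<lambda>_. mat 1 :: real^'d^'d"] by simp
qed

lemma mexp_scaleR_add:
  "mexp (s *\<^sub>R A) ** mexp (t *\<^sub>R A) = mexp ((s + t) *\<^sub>R A)"
proof (rule mexp_eqI[symmetric])
  let ?a = "\<lambda>n. (1 / fact n) *\<^sub>R matpow (s *\<^sub>R A) n"
  let ?b = "\<lambda>n. (1 / fact n) *\<^sub>R matpow (t *\<^sub>R A) n"
  have "(\<lambda>k. \<Sum>i\<le>k. ?a i ** ?b (k - i)) sums (mexp (s *\<^sub>R A) ** mexp (t *\<^sub>R A))"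
    using bounded_bilinear_Cauchy_product_sums[OF bounded_bilinear_matrix_mult
        summable_norm_mexp_series summable_norm_mexp_series]
    by (simp add: mexp_def)
  moreover have "(\<Sum>i\<le>k. ?a i ** ?b (k - i)) = (1 / fact k) *\<^sub>R matpow ((s + t) *\<^sub>R A) k" for k
  proof -
    have "?a i ** ?b (k - i) = ((s ^ i /\<^sub>R fact i) * (t ^ (k - i) /\<^sub>R fact (k - i))) *\<^sub>R matpow A k"
      if "i \<le> k" for i
      using that
      by (simp add: matpow_scaleR matrix_scalar_ac scalar_matrix_assoc[symmetric]
          matpow_add[symmetric] field_simps del: matpow.simps)
    then have "(\<Sum>i\<le>k. ?a i ** ?b (k - i))
        = (\<Sum>i\<le>k. (s ^ i /\<^sub>R fact i) * (t ^ (k - i) /\<^sub>R fact (k - i))) *\<^sub>R matpow A k"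
      by (simp add: scaleR_sum_left del: matpow.simps)
    also have "\<dots> = ((s + t) ^ k /\<^sub>R fact k) *\<^sub>R matpow A k"
      by (simp only: exp_series_add_commuting[of s t, symmetric] mult.commute)
    finally show ?thesis
      by (simp add: matpow_scaleR divide_inverse mult.commute)
  qed
  ultimately show "(\<lambda>k. (1 / fact k) *\<^sub>R matpow ((s + t) *\<^sub>R A) k)
      sums (mexp (s *\<^sub>R A) ** mexp (t *\<^sub>R A))"
    by simp
qed

lemma mexp_half: "mexp A = mexp ((1/2) *\<^sub>R A) ** mexp ((1/2) *\<^sub>R A)"
  using mexp_scaleR_add[of "1/2" A "1/2"] by simp

lemma mexp_uminus_half: "mexp (- A) = mexp ((-1/2) *\<^sub>R A) ** mexp ((-1/2) *\<^sub>R A)"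
  using mexp_scaleR_add[of "-1/2" A "-1/2"] by simp

section \<open>Symmetric matrices\<close>

lemma sym_mat_scaleR: "sym_mat A \<Longrightarrow> sym_mat (c *\<^sub>R A)"
  by (simp add: sym_mat_def transpose_scalar)

lemma sym_mat_uminus: "sym_mat A \<Longrightarrow> sym_mat (- A)"
  using sym_mat_scaleR[of A "-1"] by simp

lemma sym_mat_diff: "sym_mat A \<Longrightarrow> sym_mat B \<Longrightarrow> sym_mat (A - B)"
  by (simp add: sym_mat_def transpose_def vec_eq_iff)

lemma sym_mat_mexp: "sym_mat A \<Longrightarrow> sym_mat (mexp A)"
  by (simp add: sym_mat_def transpose_mexp)

lemma inner_sym_mat: "sym_mat S \<Longrightarrow> inner u (S *v w) = inner (S *v u) w"
  unfolding sym_mat_def by (metis transpose_matrix_vector dot_lmul_matrix)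

lemma sym_mat_polarization:
  assumes "sym_mat X"
  shows "4 * inner u (X *v w) = inner (u + w) (X *v (u + w)) - inner (u - w) (X *v (u - w))"
  using inner_sym_mat[OF assms, of w u]
  by (simp add: algebra_simps inner_commute)

lemma abs_entry_le_if_quadratic_form_bounded:
  assumes X: "sym_mat X" and K: "\<And>u. \<bar>inner u (X *v u)\<bar> \<le> (norm u)\<^sup>2 * K"
  shows "\<bar>X $ i $ j\<bar> \<le> K"
proof -
  let ?u = "axis i (1::real)" and ?w = "axis j (1::real)"
  have "4 * \<bar>X $ i $ j\<bar> \<le> K * ((norm (?u + ?w))\<^sup>2 + (norm (?u - ?w))\<^sup>2)"
    using sym_mat_polarization[OF X, of ?u ?w] K[of "?u + ?w"] K[of "?u - ?w"]
    by (simp add: inner_axis_matrix_vector algebra_simps)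
  also have "\<dots> = 4 * K"
    by (simp add: power2_norm_eq_inner algebra_simps inner_commute)
  finally show ?thesis
    by simp
qed

lemma trace_mexp_mult_mexp_uminus:
  assumes "sym_mat A" "sym_mat B"
  shows "trace (mexp A ** mexp (- B)) = (norm (mexp ((1/2) *\<^sub>R A) ** mexp ((-1/2) *\<^sub>R B)))\<^sup>2"
proof -
  define S where "S = mexp ((1/2) *\<^sub>R A)"
  define T where "T = mexp ((-1/2) *\<^sub>R B)"
  have "sym_mat S" "sym_mat T"
    unfolding S_def T_def by (intro sym_mat_mexp sym_mat_scaleR assms)+
  have "mexp A = S ** S" "mexp (- B) = T ** T"
    unfolding S_def T_def by (rule mexp_half, rule mexp_uminus_half)
  then have "trace (mexp A ** mexp (- B)) = trace (((S ** S) ** T) ** T)"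
    by (simp only: matrix_mul_assoc)
  also have "\<dots> = trace (T ** ((S ** S) ** T))"
    by (rule trace_mul_sym)
  also have "\<dots> = trace (transpose (S ** T) ** (S ** T))"
    using \<open>sym_mat S\<close> \<open>sym_mat T\<close>
    by (simp add: sym_mat_def matrix_transpose_mul matrix_mul_assoc)
  finally show ?thesis
    unfolding S_def T_def trace_transpose_mult_self .
qed

lemma trace_mexp_mult_mexp_uminus_nonneg:
  "sym_mat A \<Longrightarrow> sym_mat B \<Longrightarrow> 0 \<le> trace (mexp A ** mexp (- B))"
  by (simp add: trace_mexp_mult_mexp_uminus)

lemma trace_mexp: "sym_mat A \<Longrightarrow> trace (mexp A) = (norm (mexp ((1/2) *\<^sub>R A)))\<^sup>2"
  using trace_mexp_mult_mexp_uminus[of A 0]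
  by (simp add: mexp_zero sym_mat_def transpose_def vec_eq_iff)

lemma trace_mexp_nonneg: "sym_mat A \<Longrightarrow> 0 \<le> trace (mexp A)"
  by (simp add: trace_mexp)

lemma trace_mexp_le_mult:
  assumes "sym_mat A" "sym_mat B"
  shows "trace (mexp A) \<le> trace (mexp A ** mexp (- B)) * trace (mexp B)"
proof -
  define S where "S = mexp ((1/2) *\<^sub>R A)"
  define T where "T = mexp ((-1/2) *\<^sub>R B)"
  define U where "U = mexp ((1/2) *\<^sub>R B)"
  have "T ** U = mat 1"
    unfolding T_def U_def using mexp_scaleR_add[of "-1/2" B "1/2"] by (simp add: mexp_zero)
  then have "S = (S ** T) ** U"
    by (simp add: matrix_mul_assoc[symmetric])
  then have "norm S \<le> norm (S ** T) * norm U"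
    by (metis norm_matrix_mult_le)
  then have "(norm S)\<^sup>2 \<le> (norm (S ** T))\<^sup>2 * (norm U)\<^sup>2"
    by (metis norm_ge_zero power_mono power_mult_distrib)
  then show ?thesis
    using assms by (simp add: trace_mexp trace_mexp_mult_mexp_uminus S_def T_def U_def)
qed

section \<open>Quadratic forms of matrix exponentials\<close>

lemma inner_mexp_double:
  assumes "sym_mat D"
  shows "inner u (mexp (2 *\<^sub>R D) *v u) = (norm (mexp D *v u))\<^sup>2"
proof -
  have "mexp (2 *\<^sub>R D) = mexp D ** mexp D"
    using mexp_scaleR_add[of 1 D 1] by simp
  then show ?thesis
    using inner_sym_mat[OF sym_mat_mexp[OF assms]]
    by (simp add: matrix_vector_mul_assoc[symmetric] power2_norm_eq_inner)
qed

lemma inner_mexp_le_trace: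
  assumes "sym_mat D"
  shows "inner u (mexp D *v u) \<le> (norm u)\<^sup>2 * trace (mexp D)"
proof -
  have "norm (mexp ((1/2) *\<^sub>R D) *v u) \<le> norm (mexp ((1/2) *\<^sub>R D)) * norm u"
    by (rule norm_matrix_vector_mult_le)
  then have "(norm (mexp ((1/2) *\<^sub>R D) *v u))\<^sup>2 \<le> (norm (mexp ((1/2) *\<^sub>R D)))\<^sup>2 * (norm u)\<^sup>2"
    by (metis norm_ge_zero power_mono power_mult_distrib)
  then show ?thesis
    using inner_mexp_double[of "(1/2) *\<^sub>R D" u] assms
    by (simp add: sym_mat_scaleR trace_mexp mult.commute)
qed

lemma inner_mexp_square_le:
  assumes "sym_mat D" "norm u = 1"
  shows "(inner u (mexp D *v u))\<^sup>2 \<le> inner u (mexp (2 *\<^sub>R D) *v u)"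
  using inner_power2_le[of u "mexp D *v u"] assms by (simp add: inner_mexp_double)

lemma inner_mexp_power2_le:
  assumes "norm u = 1"
  shows "sym_mat D \<Longrightarrow> (inner u (mexp D *v u)) ^ (2 ^ k) \<le> inner u (mexp ((2 ^ k) *\<^sub>R D) *v u)"
proof (induction k arbitrary: D)
  case (Suc k)
  have "(inner u (mexp D *v u)) ^ (2 ^ Suc k) = ((inner u (mexp D *v u))\<^sup>2) ^ (2 ^ k)"
    by (simp add: power_mult[symmetric] mult.commute)
  also have "\<dots> \<le> (inner u (mexp (2 *\<^sub>R D) *v u)) ^ (2 ^ k)"
    by (intro power_mono inner_mexp_square_le Suc.prems assms) simp
  also have "\<dots> \<le> inner u (mexp ((2 ^ k) *\<^sub>R 2 *\<^sub>R D) *v u)"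
    by (intro Suc.IH sym_mat_scaleR Suc.prems)
  finally show ?case
    by (simp add: mult.commute)
qed simp

lemma inner_mexp_ge:
  assumes u: "norm u = 1" and E: "norm E \<le> 1"
  shows "1 + inner u (E *v u) - (norm E)\<^sup>2 \<le> inner u (mexp E *v u)"
proof -
  define c where "c n = inner u (((1 / fact n) *\<^sub>R matpow E n) *v u)" for n
  define e where "e n = norm E ^ n /\<^sub>R fact n" for n
  have "c sums inner u (mexp E *v u)"
    unfolding c_def by (rule bounded_linear_mexp_sums[OF bounded_linear_quadratic_form])
  then have sums: "(\<lambda>n. c n + e n) sums (inner u (mexp E *v u) + exp (norm E))"
    unfolding e_def by (intro sums_add exp_converges)
  have "0 \<le> c n + e n" for n
  proof (cases n)
    case 0
    then show ?thesis using u by (simp add: c_def e_def power2_norm_eq_inner[symmetric])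
  next
    case (Suc m)
    have "\<bar>c n\<bar> \<le> norm (matpow E n) / fact n"
      using abs_inner_matrix_vector_le[of u "matpow E n"] u
      by (simp add: c_def scaleR_matrix_vector_assoc[symmetric] divide_right_mono)
    also have "\<dots> \<le> norm E ^ n / fact n"
      using norm_matpow_Suc_le[of E m] Suc by (simp add: divide_right_mono del: matpow.simps)
    also have "\<dots> = e n"
      by (simp add: e_def divide_inverse_commute)
    finally show ?thesis by linarith
  qed
  then have "(\<Sum>n<2. c n + e n) \<le> inner u (mexp E *v u) + exp (norm E)"
    using sum_le_suminf[of "\<lambda>n. c n + e n" "{..<2}"] sums by (simp add: sums_iff)
  moreover have "exp (norm E) \<le> 1 + norm E + (norm E)\<^sup>2"
    using E by (intro exp_bound) simp_all
  moreover have "(\<Sum>n<2. c n + e n) = 2 + inner u (E *v u) + norm E"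
    using u by (simp add: c_def e_def numeral_2_eq_2 power2_norm_eq_inner[symmetric])
  ultimately show ?thesis
    by linarith
qed

lemma inner_le_inner_mexp:
  assumes D: "sym_mat D" and u: "norm u = 1"
  shows "inner u (D *v u) \<le> inner u (mexp D *v u)"
proof -
  define a where "a = inner u (D *v u)"
  define c where "c = (norm D)\<^sup>2"
  obtain k where k: "1 + norm D + 2 * \<bar>a\<bar> + 2 * c < (2::real) ^ k"
    using real_arch_pow[of 2] by fastforce
  define N where "N = (2::real) ^ k"
  define b where "b = a / N - c / N\<^sup>2"
  have c: "0 \<le> c" by (simp add: c_def)
  then have N: "1 \<le> N" "norm D \<le> N" "2 * \<bar>a\<bar> \<le> N" "2 * c \<le> N"
    using k norm_ge_zero[of D] abs_ge_zero[of a] unfolding N_def by linarith+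
  have "\<bar>a\<bar> / N \<le> 1/2" "c / N \<le> 1/2"
    using N by (simp_all add: pos_divide_le_eq)
  moreover have "c / N\<^sup>2 \<le> c / N"
    using N c by (intro divide_left_mono) (simp_all add: power2_eq_square)
  moreover have "- (\<bar>a\<bar> / N) \<le> a / N"
    using N by (simp add: pos_le_divide_eq)
  ultimately have b: "-1 \<le> b"
    unfolding b_def by linarith
  have "1 + b \<le> inner u (mexp ((1 / N) *\<^sub>R D) *v u)"
    using inner_mexp_ge[OF u, of "(1 / N) *\<^sub>R D"] N
    by (simp add: a_def b_def c_def power_divide scaleR_matrix_vector_assoc[symmetric])
  have "1 + N * b \<le> (1 + b) ^ 2 ^ k"
    using Bernoulli_inequality[OF b, of "2 ^ k"] by (simp add: N_def)
  also have "\<dots> \<le> (inner u (mexp ((1 / N) *\<^sub>R D) *v u)) ^ 2 ^ k"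
    using \<open>1 + b \<le> _\<close> b by (intro power_mono) simp_all
  also have "\<dots> \<le> inner u (mexp D *v u)"
    using inner_mexp_power2_le[OF u sym_mat_scaleR[OF D], of "1 / N" k] by (simp add: N_def)
  finally have "1 + N * b \<le> inner u (mexp D *v u)" .
  moreover have "N * b = a - c / N"
    using N by (simp add: b_def field_simps power2_eq_square)
  ultimately show ?thesis
    using \<open>c / N \<le> 1/2\<close> unfolding a_def by linarith
qed

lemma inner_le_trace_mexp:
  assumes "sym_mat D"
  shows "inner u (D *v u) \<le> (norm u)\<^sup>2 * trace (mexp D)"
proof (cases "u = 0")
  case False
  define v where "v = (1 / norm u) *\<^sub>R u"
  have v: "norm v = 1" "u = norm u *\<^sub>R v"
    using False by (simp_all add: v_def)
  have "inner u (D *v u) = (norm u)\<^sup>2 * inner v (D *v v)"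
    by (subst (1 2) v(2)) (simp add: matrix_vector_mult_scaleR power2_eq_square)
  also have "\<dots> \<le> (norm u)\<^sup>2 * inner v (mexp D *v v)"
    by (intro mult_left_mono inner_le_inner_mexp assms v) simp
  also have "\<dots> \<le> (norm u)\<^sup>2 * trace (mexp D)"
    using inner_mexp_le_trace[OF assms, of v] v by (intro mult_left_mono) simp_all
  finally show ?thesis .
qed simp

lemma abs_inner_le_trace_mexp:
  assumes "sym_mat X"
  shows "\<bar>inner u (X *v u)\<bar> \<le> (norm u)\<^sup>2 * max (trace (mexp X)) (trace (mexp (- X)))"
proof -
  let ?m = "max (trace (mexp X)) (trace (mexp (- X)))"
  have "inner u (X *v u) \<le> (norm u)\<^sup>2 * trace (mexp X)"
    "- inner u (X *v u) \<le> (norm u)\<^sup>2 * trace (mexp (- X))"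
    using inner_le_trace_mexp[OF assms, of u] inner_le_trace_mexp[OF sym_mat_uminus[OF assms], of u]
    by (simp_all add: linear_neg[OF bounded_linear.linear[OF bounded_linear_quadratic_form]])
  moreover have "(norm u)\<^sup>2 * trace (mexp X) \<le> (norm u)\<^sup>2 * ?m"
    "(norm u)\<^sup>2 * trace (mexp (- X)) \<le> (norm u)\<^sup>2 * ?m"
    by (simp_all add: mult_left_mono)
  ultimately show ?thesis
    by linarith
qed

section \<open>Propagation of bounds along an acyclic graph\<close>

lemma funpow_add_const: "((\<lambda>t. t + c) ^^ n) t = t + of_nat n * c"
  by (induction n) (simp_all add: algebra_simps)

lemma acyclic_funpow_bound:
  fixes E :: "('v::finite \<times> 'v) set" and g :: "'v \<Rightarrow> 'a::order"
  assumes acyclic: "acyclic E" and h: "mono h" "T \<le> h T"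
    and edge: "\<And>v w. (v, w) \<in> E \<Longrightarrow> g v \<le> h (g w)"
    and boundary: "\<And>v. v \<in> \<Gamma> \<Longrightarrow> g v \<le> T"
    and sinks: "\<forall>v. is_sink E v \<longrightarrow> v \<in> \<Gamma>"
  shows "g v \<le> (h ^^ CARD('v)) T"
proof -
  define depth where "depth v = card {w. (v, w) \<in> E\<^sup>+}" for v
  have "g v \<le> (h ^^ depth v) T" for v
  proof (induction v rule: wf_induct[OF finite_acyclic_wf_converse[OF finite acyclic]])
    case (1 v)
    show ?case
    proof (cases "v \<in> \<Gamma>")
      case True
      then show ?thesis
        using boundary funpow_mono2[OF h(1) le0 order.refl h(2)] by (metis funpow_0 order.trans)
    next
      case False
      then obtain w where vw: "(v, w) \<in> E"
        using sinks by (auto simp: is_sink_def)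
      have "{u. (w, u) \<in> E\<^sup>+} \<subset> {u. (v, u) \<in> E\<^sup>+}"
        using vw acyclic by (auto simp: acyclic_def intro: trancl_into_trancl2)
      then have "depth w < depth v"
        unfolding depth_def by (intro psubset_card_mono) simp_all
      have "g v \<le> h (g w)"
        by (rule edge[OF vw])
      also have "\<dots> \<le> h ((h ^^ depth w) T)"
        using 1 vw by (intro monoD[OF h(1)]) simp
      also have "\<dots> \<le> (h ^^ depth v) T"
        using funpow_mono2[OF h(1) \<open>depth w < depth v\<close>[folded Suc_le_eq] order.refl h(2)] by simp
      finally show ?thesis .
    qed
  qed
  moreover have "depth v \<le> CARD('v)"
    unfolding depth_def by (rule card_mono) simp_all
  ultimately show ?thesis
    using funpow_mono2[OF h(1) _ order.refl h(2)] order.trans by blast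
qed

lemma acyclic_funpow_bound_converse:
  fixes E :: "('v::finite \<times> 'v) set" and g :: "'v \<Rightarrow> 'a::order"
  assumes "acyclic E" "mono h" "T \<le> h T"
    and edge: "\<And>v w. (v, w) \<in> E \<Longrightarrow> g w \<le> h (g v)"
    and "\<And>v. v \<in> \<Gamma> \<Longrightarrow> g v \<le> T"
    and sources: "\<forall>v. is_source E v \<longrightarrow> v \<in> \<Gamma>"
  shows "g v \<le> (h ^^ CARD('v)) T"
  using assms sources by (intro acyclic_funpow_bound[of "E\<inverse>" h T g \<Gamma>])
    (auto simp: is_sink_def is_source_def)

section \<open>Norms on arrays of symmetric matrices\<close>

lemma is_norm_on_sum_le:
  assumes S: "subspace S" and N: "is_norm_on S N"
  shows "finite A \<Longrightarrow> (\<And>a. a \<in> A \<Longrightarrow> f a \<in> S) \<Longrightarrow> N (sum f A) \<le> (\<Sum>a\<in>A. N (f a))"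
proof (induction A rule: finite_induct)
  case empty
  have "N 0 = 0"
    using N subspace_0[OF S] unfolding is_norm_on_def by blast
  then show ?case
    by simp
next
  case (insert a A)
  then have "f a \<in> S" "sum f A \<in> S"
    using subspace_sum[OF S, of A f] by simp_all
  then have "N (f a + sum f A) \<le> N (f a) + N (sum f A)"
    using N unfolding is_norm_on_def by blast
  then show ?case
    using insert by simp
qed

lemma is_norm_on_le_norm:
  fixes N :: "'a::euclidean_space \<Rightarrow> real"
  assumes S: "subspace S" and N: "is_norm_on S N"
    and P: "linear P" "\<And>x. P x \<in> S" "\<And>x. x \<in> S \<Longrightarrow> P x = x"
  shows "\<exists>C\<ge>0. \<forall>x\<in>S. N x \<le> C * norm x"
proof (intro exI conjI ballI)
  define C where "C = (\<Sum>b\<in>Basis. N (P b))"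
  have N_P: "0 \<le> N (P b)" for b
    using N P(2) by (simp add: is_norm_on_def)
  then show "0 \<le> C"
    by (simp add: C_def sum_nonneg)
  fix x assume "x \<in> S"
  then have "x = P (\<Sum>b\<in>Basis. (x \<bullet> b) *\<^sub>R b)"
    by (simp add: P(3) euclidean_representation)
  also have "\<dots> = (\<Sum>b\<in>Basis. (x \<bullet> b) *\<^sub>R P b)"
    by (simp add: linear_sum[OF P(1)] linear_scale[OF P(1)])
  finally have "N x = N (\<Sum>b\<in>Basis. (x \<bullet> b) *\<^sub>R P b)"
    by (rule arg_cong)
  also have "\<dots> \<le> (\<Sum>b\<in>Basis. N ((x \<bullet> b) *\<^sub>R P b))"
    by (intro is_norm_on_sum_le[OF S N finite_Basis] subspace_scale[OF S P(2)])
  also have "\<dots> = (\<Sum>b\<in>Basis. \<bar>x \<bullet> b\<bar> * N (P b))"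
    using N P(2) by (simp add: is_norm_on_def)
  also have "\<dots> \<le> (\<Sum>b\<in>Basis. norm x * N (P b))"
    by (intro sum_mono mult_right_mono Basis_le_norm N_P)
  also have "\<dots> = C * norm x"
    by (simp add: C_def sum_distrib_left[symmetric] mult.commute)
  finally show "N x \<le> C * norm x" .
qed

definition sym_part :: "real^'d^'d^'v \<Rightarrow> real^'d^'d^'v" where
  "sym_part x = (\<chi> v. (1/2) *\<^sub>R (x $ v + transpose (x $ v)))"

lemma linear_sym_part: "linear sym_part"
  by (rule linearI) (simp_all add: sym_part_def vec_eq_iff transpose_def algebra_simps)

lemma sym_part_in_SymV: "sym_part x \<in> SymV"
  by (simp add: SymV_def sym_mat_def sym_part_def vec_eq_iff transpose_def)

lemma sym_part_SymV: "x \<in> SymV \<Longrightarrow> sym_part x = x"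
  by (simp add: SymV_def sym_mat_def sym_part_def vec_eq_iff)

lemma subspace_SymV: "subspace SymV"
  by (simp add: subspace_def SymV_def sym_mat_def transpose_def vec_eq_iff)

lemma SymV_bd_subset: "SymV_bd \<Gamma> z \<subseteq> SymV"
  by (auto simp: SymV_bd_def)

lemma norm_le_if_quadratic_forms_bounded:
  fixes x :: "real^'d^'d^'v"
  assumes x: "x \<in> SymV" and K: "\<And>v u. \<bar>inner u (x $ v *v u)\<bar> \<le> (norm u)\<^sup>2 * K"
  shows "norm x \<le> real CARD('v) * (real CARD('d) * (real CARD('d) * K))"
proof -
  have "norm (x $ v $ i $ j) \<le> K" for v i j
    using x K by (simp add: abs_entry_le_if_quadratic_form_bounded SymV_def)
  then have "norm (x $ v $ i) \<le> real CARD('d) * K" for v i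
    by (rule norm_vec_le_card_mult)
  then have "norm (x $ v) \<le> real CARD('d) * (real CARD('d) * K)" for v
    by (rule norm_vec_le_card_mult)
  then show ?thesis
    by (rule norm_vec_le_card_mult)
qed

lemma coercive_if_sublevel_forms_bounded:
  fixes N f :: "real^'d^'d^'v \<Rightarrow> real"
  assumes N: "is_norm_on SymV N" and X: "X \<subseteq> SymV"
    and sublevel: "\<exists>K. \<forall>x\<in>X. f x \<le> M \<longrightarrow> (\<forall>v u. \<bar>inner u (x $ v *v u)\<bar> \<le> (norm u)\<^sup>2 * K)"
  shows "\<exists>R. \<forall>x\<in>X. N x > R \<longrightarrow> f x > M"
proof -
  obtain K where K: "\<And>x v u. x \<in> X \<Longrightarrow> f x \<le> M \<Longrightarrow> \<bar>inner u (x $ v *v u)\<bar> \<le> (norm u)\<^sup>2 * K"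
    using sublevel by blast
  obtain C where C: "0 \<le> C" "\<And>x. x \<in> SymV \<Longrightarrow> N x \<le> C * norm x"
    using is_norm_on_le_norm[OF subspace_SymV N linear_sym_part sym_part_in_SymV sym_part_SymV]
    by blast
  have "N x \<le> C * (real CARD('v) * (real CARD('d) * (real CARD('d) * K)))"
    if "x \<in> X" "f x \<le> M" for x
    using C K[OF that] norm_le_if_quadratic_forms_bounded[of x K] X that
    by (meson mult_left_mono order_trans subsetD)
  then show ?thesis
    by (meson not_le)
qed

section \<open>Sublevel sets of phi and chi\<close>

lemma SymV_bd_sym_mat: "x \<in> SymV_bd \<Gamma> z \<Longrightarrow> sym_mat (x $ v)"
  by (simp add: SymV_bd_def SymV_def)

lemma SymV_bd_boundary: "x \<in> SymV_bd \<Gamma> z \<Longrightarrow> v \<in> \<Gamma> \<Longrightarrow> x $ v = z v"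
  by (simp add: SymV_bd_def)

lemma phi_edge_le:
  fixes E :: "('v::finite \<times> 'v) set"
  assumes "x \<in> SymV" "(v, w) \<in> E"
  shows "trace (mexp (x $ v) ** mexp (- x $ w)) \<le> phi E x"
  using assms member_le_sum[of "(v, w)" E "\<lambda>(v, w). trace (mexp (x $ v) ** mexp (- x $ w))"]
  by (simp add: phi_def case_prod_unfold trace_mexp_mult_mexp_uminus_nonneg SymV_def)

lemma chi_edge_le:
  fixes E :: "('v::finite \<times> 'v) set"
  assumes "x \<in> SymV" "(v, w) \<in> E"
  shows "trace (mexp (x $ v - x $ w)) \<le> chi E x"
  using assms member_le_sum[of "(v, w)" E "\<lambda>(v, w). trace (mexp (x $ v - x $ w))"]
  by (simp add: chi_def case_prod_unfold trace_mexp_nonneg sym_mat_diff SymV_def)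

lemma phi_sublevel_traces_bounded:
  fixes E :: "('v::finite \<times> 'v) set" and z :: "'v \<Rightarrow> real^'d::finite^'d"
  assumes acyclic: "acyclic E"
    and sinks: "\<forall>v. is_sink E v \<longrightarrow> v \<in> \<Gamma>" and sources: "\<forall>v. is_source E v \<longrightarrow> v \<in> \<Gamma>"
    and zsym: "\<forall>v\<in>\<Gamma>. sym_mat (z v)"
  shows "\<exists>K. \<forall>x\<in>SymV_bd \<Gamma> z. phi E x \<le> M \<longrightarrow>
           (\<forall>v. max (trace (mexp (x $ v))) (trace (mexp (- x $ v))) \<le> K)"
proof (intro exI ballI impI allI)
  define C where "C = max M 1"
  define h where "h t = C * t" for t :: real
  define T where "T s = (\<Sum>v\<in>\<Gamma>. trace (mexp (s *\<^sub>R z v)))" for s :: real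
  have h: "mono h"
    by (simp add: h_def C_def mono_def mult_left_mono)
  have "0 \<le> T s" for s
    unfolding T_def using zsym by (intro sum_nonneg trace_mexp_nonneg sym_mat_scaleR) simp
  then have T: "T s \<le> h (T s)" for s
    using mult_right_mono[of 1 C "T s"] by (simp add: h_def C_def)
  fix x v
  assume x: "x \<in> SymV_bd \<Gamma> z" and sublevel: "phi E x \<le> M"
  note sym = SymV_bd_sym_mat[OF x]
  have boundary: "trace (mexp (s *\<^sub>R x $ w)) \<le> T s" if "w \<in> \<Gamma>" for w s
    unfolding T_def SymV_bd_boundary[OF x that] using that zsym
    by (auto intro!: member_le_sum trace_mexp_nonneg sym_mat_scaleR)
  have edge: "trace (mexp (x $ v) ** mexp (- x $ w)) \<le> C" if "(v, w) \<in> E" for v w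
    using phi_edge_le[OF subsetD[OF SymV_bd_subset x] that] sublevel by (simp add: C_def)
  have "trace (mexp (x $ v)) \<le> (h ^^ CARD('v)) (T 1)"
  proof (rule acyclic_funpow_bound[OF acyclic h T _ _ sinks])
    fix v w assume "(v, w) \<in> E"
    have "trace (mexp (x $ v)) \<le> trace (mexp (x $ v) ** mexp (- x $ w)) * trace (mexp (x $ w))"
      by (rule trace_mexp_le_mult[OF sym sym])
    also have "\<dots> \<le> h (trace (mexp (x $ w)))"
      unfolding h_def by (intro mult_right_mono edge \<open>(v, w) \<in> E\<close> trace_mexp_nonneg sym)
    finally show "trace (mexp (x $ v)) \<le> h (trace (mexp (x $ w)))" .
  qed (use boundary[of _ 1] in simp_all)
  moreover have "trace (mexp (- x $ v)) \<le> (h ^^ CARD('v)) (T (-1))"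
  proof (rule acyclic_funpow_bound_converse[OF acyclic h T _ _ sources])
    fix v w assume "(v, w) \<in> E"
    have "trace (mexp (- x $ w))
        \<le> trace (mexp (- x $ w) ** mexp (- (- x $ v))) * trace (mexp (- x $ v))"
      by (rule trace_mexp_le_mult[OF sym_mat_uminus[OF sym] sym_mat_uminus[OF sym]])
    also have "\<dots> = trace (mexp (x $ v) ** mexp (- x $ w)) * trace (mexp (- x $ v))"
      by (simp only: minus_minus trace_mul_sym[of "mexp (- x $ w)"])
    also have "\<dots> \<le> h (trace (mexp (- x $ v)))"
      unfolding h_def
      by (intro mult_right_mono edge \<open>(v, w) \<in> E\<close> trace_mexp_nonneg sym_mat_uminus sym)
    finally show "trace (mexp (- x $ w)) \<le> h (trace (mexp (- x $ v)))" .
  qed (use boundary[of _ "-1"] in simp_all)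
  ultimately show "max (trace (mexp (x $ v))) (trace (mexp (- x $ v)))
      \<le> max ((h ^^ CARD('v)) (T 1)) ((h ^^ CARD('v)) (T (-1)))"
    by (rule max.mono)
qed

lemma phi_sublevel_forms_bounded:
  fixes E :: "('v::finite \<times> 'v) set" and z :: "'v \<Rightarrow> real^'d::finite^'d"
  assumes "acyclic E"
    and "\<forall>v. is_sink E v \<longrightarrow> v \<in> \<Gamma>" "\<forall>v. is_source E v \<longrightarrow> v \<in> \<Gamma>"
    and "\<forall>v\<in>\<Gamma>. sym_mat (z v)"
  shows "\<exists>K. \<forall>x\<in>SymV_bd \<Gamma> z. phi E x \<le> M \<longrightarrow> (\<forall>v u. \<bar>inner u (x $ v *v u)\<bar> \<le> (norm u)\<^sup>2 * K)"
proof -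
  obtain K where K: "\<And>x v. x \<in> SymV_bd \<Gamma> z \<Longrightarrow> phi E x \<le> M \<Longrightarrow>
      max (trace (mexp (x $ v))) (trace (mexp (- x $ v))) \<le> K"
    using phi_sublevel_traces_bounded[OF assms] by blast
  show ?thesis
    using order_trans[OF abs_inner_le_trace_mexp[OF SymV_bd_sym_mat] mult_left_mono[OF K]]
    by (intro exI[of _ K]) simp
qed

lemma chi_sublevel_forms_bounded:
  fixes E :: "('v::finite \<times> 'v) set" and z :: "'v \<Rightarrow> real^'d::finite^'d"
  assumes acyclic: "acyclic E"
    and sinks: "\<forall>v. is_sink E v \<longrightarrow> v \<in> \<Gamma>" and sources: "\<forall>v. is_source E v \<longrightarrow> v \<in> \<Gamma>"
  shows "\<exists>K. \<forall>x\<in>SymV_bd \<Gamma> z. chi E x \<le> M \<longrightarrow> (\<forall>v u. \<bar>inner u (x $ v *v u)\<bar> \<le> (norm u)\<^sup>2 * K)"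
proof (intro exI ballI impI allI)
  define C where "C = max M 0"
  define Z where "Z = (\<Sum>v\<in>\<Gamma>. norm (z v))"
  fix x v and u :: "real^'d"
  assume x: "x \<in> SymV_bd \<Gamma> z" and sublevel: "chi E x \<le> M"
  define h where "h t = t + (norm u)\<^sup>2 * C" for t :: real
  have h: "mono h" "(norm u)\<^sup>2 * Z \<le> h ((norm u)\<^sup>2 * Z)"
    by (simp_all add: h_def mono_def C_def)
  note sym = SymV_bd_sym_mat[OF x]
  have boundary: "\<bar>inner u (x $ w *v u)\<bar> \<le> (norm u)\<^sup>2 * Z" if "w \<in> \<Gamma>" for w
  proof -
    have "\<bar>inner u (x $ w *v u)\<bar> \<le> (norm u)\<^sup>2 * norm (z w)"
      using abs_inner_matrix_vector_le[of u "x $ w"] by (simp add: SymV_bd_boundary[OF x that])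
    also have "\<dots> \<le> (norm u)\<^sup>2 * Z"
      unfolding Z_def using that by (intro mult_left_mono member_le_sum) simp_all
    finally show ?thesis .
  qed
  have edge: "inner u (x $ v *v u) \<le> h (inner u (x $ w *v u))" if "(v, w) \<in> E" for v w
  proof -
    have "trace (mexp (x $ v - x $ w)) \<le> C"
      using chi_edge_le[OF subsetD[OF SymV_bd_subset x] that] sublevel by (simp add: C_def)
    then have "inner u ((x $ v - x $ w) *v u) \<le> (norm u)\<^sup>2 * C"
      by (intro order_trans[OF inner_le_trace_mexp[OF sym_mat_diff[OF sym sym]]] mult_left_mono)
        simp_all
    then show ?thesis
      by (simp add: h_def matrix_vector_mult_diff_rdistrib inner_diff_right)
  qed
  have "inner u (x $ v *v u) \<le> (h ^^ CARD('v)) ((norm u)\<^sup>2 * Z)"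
    using boundary by (intro acyclic_funpow_bound[OF acyclic h _ _ sinks] edge)
      (auto simp: abs_le_iff)
  moreover have "- inner u (x $ v *v u) \<le> (h ^^ CARD('v)) ((norm u)\<^sup>2 * Z)"
  proof (rule acyclic_funpow_bound_converse[OF acyclic h _ _ sources])
    fix v w assume "(v, w) \<in> E"
    then show "- inner u (x $ w *v u) \<le> h (- inner u (x $ v *v u))"
      using edge by (fastforce simp: h_def)
  qed (use boundary in \<open>auto simp: abs_le_iff\<close>)
  moreover have "(h ^^ CARD('v)) ((norm u)\<^sup>2 * Z) = (norm u)\<^sup>2 * (Z + CARD('v) * C)"
    unfolding h_def funpow_add_const by (simp add: algebra_simps)
  ultimately show "\<bar>inner u (x $ v *v u)\<bar> \<le> (norm u)\<^sup>2 * (Z + CARD('v) * C)"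
    by linarith
qed

theorem mainTheorem14:
  fixes E :: "('v::finite \<times> 'v) set"
    and \<Gamma> :: "'v set"
    and z :: "'v \<Rightarrow> real^'d::finite^'d"
    and N :: "real^'d^'d^'v \<Rightarrow> real"
  assumes loopfree: "\<forall>v. (v, v) \<notin> E"
    and acyc: "acyclic E"
    and sinks: "\<forall>v. is_sink E v \<longrightarrow> v \<in> \<Gamma>"
    and sources: "\<forall>v. is_source E v \<longrightarrow> v \<in> \<Gamma>"
    and interior: "UNIV - \<Gamma> \<noteq> {}"
    and zsym: "\<forall>v\<in>\<Gamma>. sym_mat (z v)"
    and norm: "is_norm_on SymV N"
  shows "(\<forall>M. \<exists>R. \<forall>x\<in>SymV_bd \<Gamma> z. N x > R \<longrightarrow> phi E x > M)
       \<and> (\<forall>M. \<exists>R. \<forall>x\<in>SymV_bd \<Gamma> z. N x > R \<longrightarrow> chi E x > M)"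
  using coercive_if_sublevel_forms_bounded[OF norm SymV_bd_subset
      phi_sublevel_forms_bounded[OF acyc sinks sources zsym]]
    coercive_if_sublevel_forms_bounded[OF norm SymV_bd_subset
      chi_sublevel_forms_bounded[OF acyc sinks sources]]
  by blast

end
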